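(* Let $k$ be a field, $V$ a $k$-vector space, and $\varphi\in\operatorname{End}_k(V)$ a finite potent endomorphism. Then the Drazin inverse $\varphi^D$ of $\varphi$ is a G-Drazin inverse of $\varphi$ if and only if $i(\varphi)\le 1$.
   Context: An endomorphism $\varphi$ of a $k$-vector space $V$ is finite potent if $\varphi^n(V)$ is finite dimensional for some $n$. For such $\varphi$, the AST-decomposition is $V=U_\varphi\oplus W_\varphi$ where $U_\varphi=\{v\in V: \varphi^m(v)=0 \text{ for some } m\}$ and $W_\varphi=\{v\in V: p(\varphi)(v)=0 \text{ for some } p(x)\in k[x] \text{ coprime to } x\}$; $\varphi|_{U_\varphi}$ is nilpotent, $W_\varphi$ is finite dimensional and $\varphi|_{W_\varphi}$ is an automorphism. The index $i(\varphi)$ is the nilpotency order of $\varphi|_{U_\varphi}$. The Drazin inverse $\varphi^D$ is the linear map equal to $(\varphi|_{W_\varphi})^{-1}$ on $W_\varphi$ and to $0$ on $U_\varphi$. An endomorphism $\psi$ is a G-Drazin inverse of $\varphi$ if $\varphi\circ\psi\circ\varphi=\varphi$ and $\psi\circ\varphi^{r}=\varphi^{r}\circ\psi$ with $r=i(\varphi)$. *)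

theory Defs
  imports Main "HOL-Computational_Algebra.Polynomial"
begin

text \<open>Vector spaces over an arbitrary field 'a are given by a scalar multiplication
  scale :: 'a \<Rightarrow> 'b \<Rightarrow> 'b satisfying the locale vector_space scale.\<close>

definition fin_dim_subset :: "('a::field \<Rightarrow> 'b::ab_group_add \<Rightarrow> 'b) \<Rightarrow> 'b set \<Rightarrow> bool" where
  "fin_dim_subset scale S \<longleftrightarrow> (\<exists>B. finite B \<and> B \<subseteq> S \<and> S \<subseteq> module.span scale B)"

definition finite_potent :: "('a::field \<Rightarrow> 'b::ab_group_add \<Rightarrow> 'b) \<Rightarrow> ('b \<Rightarrow> 'b) \<Rightarrow> bool" where
  "finite_potent scale \<phi> \<longleftrightarrow> (\<exists>n. fin_dim_subset scale (range (\<phi> ^^ n)))"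

definition poly_endo :: "('a::field \<Rightarrow> 'b::ab_group_add \<Rightarrow> 'b) \<Rightarrow> 'a poly \<Rightarrow> ('b \<Rightarrow> 'b) \<Rightarrow> 'b \<Rightarrow> 'b" where
  "poly_endo scale p \<phi> v = (\<Sum>i\<le>degree p. scale (coeff p i) ((\<phi> ^^ i) v))"

definition U_part :: "('b::ab_group_add \<Rightarrow> 'b) \<Rightarrow> 'b set" where
  "U_part \<phi> = {v. \<exists>m. (\<phi> ^^ m) v = 0}"

definition W_part :: "('a::field \<Rightarrow> 'b::ab_group_add \<Rightarrow> 'b) \<Rightarrow> ('b \<Rightarrow> 'b) \<Rightarrow> 'b set" where
  "W_part scale \<phi> = {v. \<exists>p::'a poly. coprime p [:0, 1:] \<and> poly_endo scale p \<phi> v = 0}"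

definition fp_index :: "('b::ab_group_add \<Rightarrow> 'b) \<Rightarrow> nat" where
  "fp_index \<phi> = (LEAST n. \<forall>v\<in>U_part \<phi>. (\<phi> ^^ n) v = 0)"

definition drazin_inv :: "('a::field \<Rightarrow> 'b::ab_group_add \<Rightarrow> 'b) \<Rightarrow> ('b \<Rightarrow> 'b) \<Rightarrow> 'b \<Rightarrow> 'b" where
  "drazin_inv scale \<phi> v = (THE y. y \<in> W_part scale \<phi> \<and>
      (\<exists>u\<in>U_part \<phi>. \<exists>w\<in>W_part scale \<phi>. v = u + w \<and> \<phi> y = w))"

definition G_drazin_inverse :: "('b \<Rightarrow> 'b) \<Rightarrow> ('b \<Rightarrow> 'b) \<Rightarrow> nat \<Rightarrow> bool" where
  "G_drazin_inverse \<phi> \<psi> r \<longleftrightarrow> \<phi> \<circ> \<psi> \<circ> \<phi> = \<phi> \<and> \<psi> \<circ> (\<phi> ^^ r) = (\<phi> ^^ r) \<circ> \<psi>"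

end

theory Submission
  imports Defs
begin

(*
  Every z in the finite dimensional space phi^n(V) is killed by a nonzero polynomial
  q = x^k p with p(0) \<noteq> 0 and k bounded by the dimension, so phi^k z \<in> W.  Hence
  phi^N(V) \<subseteq> W for N large, which gives V = U \<oplus> W with phi nilpotent on U and
  bijective on W.  For v = u + w one finds phi^D (phi v) = w = phi (phi^D v), so phi^D always
  commutes with phi, while phi (phi^D (phi v)) = phi w differs from phi v = phi u + phi w by
  phi u.  Thus phi^D is a G-Drazin inverse iff phi vanishes on U, i.e. iff i(phi) \<le> 1.
*)

lemma funpow_comp_commute:
  assumes "f \<circ> g = g \<circ> f"
  shows "f \<circ> g ^^ n = g ^^ n \<circ> f"
proof (induction n)
  case (Suc n)
  show ?case
    by (simp only: funpow.simps(2) comp_assoc[symmetric] assms) (simp only: comp_assoc Suc.IH)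
qed simp

lemma bezout_X_power:
  fixes p :: "'a::field poly"
  assumes "poly p 0 \<noteq> 0"
  shows "\<exists>s t. s * p + t * [:0, 1:] ^ m = 1"
proof (induction m)
  case 0
  show ?case by (rule exI[of _ 0]) simp
next
  case (Suc m)
  then obtain s t where st: "s * p + t * [:0, 1:] ^ m = 1" by blast
  obtain c q where p: "p = pCons c q" by (cases p)
  with assms have "c \<noteq> 0" by simp
  define a b where "a = [:1/c:]" and "b = smult (1/c) q"
  have base: "a * p - b * [:0, 1:] = 1"
    using \<open>c \<noteq> 0\<close> by (simp add: a_def b_def p one_pCons)
  have ring_identity: "(s * (a * p - b * x) + t * x ^ m * a) * p + (- t * b) * x ^ Suc m
      = (s * p + t * x ^ m) * (a * p - b * x)" for x :: "'a poly"
    by (simp add: algebra_simps)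
  have "(s * (a * p - b * [:0, 1:]) + t * [:0, 1:] ^ m * a) * p + (- t * b) * [:0, 1:] ^ Suc m
      = (s * p + t * [:0, 1:] ^ m) * (a * p - b * [:0, 1:])"
    by (rule ring_identity)
  also have "\<dots> = 1" by (simp only: st base mult_1)
  finally show ?case by blast
qed

lemma coprime_X_iff_poly_0:
  fixes p :: "'a::field poly"
  shows "coprime p [:0, 1:] \<longleftrightarrow> poly p 0 \<noteq> 0"
proof
  assume coprime: "coprime p [:0, 1:]"
  show "poly p 0 \<noteq> 0"
  proof
    assume "poly p 0 = 0"
    then have "[:0, 1:] dvd p" using poly_eq_0_iff_dvd[of p 0] by simp
    then have "is_unit [:0, 1::'a:]" using coprime_common_divisor[OF coprime] by simp
    then show False using is_unit_iff_degree[of "[:0, 1::'a:]"] by simp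
  qed
next
  assume "poly p 0 \<noteq> 0"
  then obtain s t where st: "s * p + t * [:0, 1:] ^ 1 = 1" using bezout_X_power by blast
  show "coprime p [:0, 1:]"
  proof (rule coprimeI)
    fix d assume "d dvd p" "d dvd [:0, 1:]"
    then have "d dvd s * p + t * [:0, 1:] ^ 1" by (metis dvd_add dvd_mult power_one_right)
    then show "is_unit d" by (simp only: st)
  qed
qed

lemma (in vector_space) family_in_span_dependent:
  assumes "finite B" and "\<And>i. i \<le> card B \<Longrightarrow> f i \<in> span B"
  shows "\<exists>c. (\<exists>i\<le>card B. c i \<noteq> 0) \<and> (\<Sum>i\<le>card B. scale (c i) (f i)) = 0"
proof (cases "inj_on f {..card B}")
  case True
  have "card (f ` {..card B}) = Suc (card B)" using True by (simp add: card_image)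
  moreover have "f ` {..card B} \<subseteq> span B" using assms(2) by auto
  ultimately have "dependent (f ` {..card B})"
    using independent_span_bound[OF assms(1)] by fastforce
  then obtain u where u: "\<exists>v\<in>f ` {..card B}. u v \<noteq> 0"
      "(\<Sum>v\<in>f ` {..card B}. scale (u v) v) = 0"
    using dependent_finite by blast
  have "(\<Sum>i\<le>card B. scale (u (f i)) (f i)) = 0"
    using u(2) by (simp add: sum.reindex[OF True])
  with u(1) show ?thesis by (intro exI[of _ "u \<circ> f"]) auto
next
  case False
  then obtain i j where ij: "i \<le> card B" "j \<le> card B" "i \<noteq> j" "f i = f j"
    unfolding inj_on_def by auto
  define c :: "nat \<Rightarrow> 'a"
    where "c k = (if k = i then 1 else 0) - (if k = j then 1 else 0)" for k
  have "scale (c k) (f k) = (if k = i then f k else 0) - (if k = j then f k else 0)" for k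
    by (simp add: c_def scale_left_diff_distrib)
  then have "(\<Sum>k\<le>card B. scale (c k) (f k)) = f i - f j"
    using ij by (simp add: sum_subtractf)
  then show ?thesis using ij by (intro exI[of _ c]) (auto simp: c_def)
qed

locale linear_endo = vector_space scale
  for scale :: "'a::field \<Rightarrow> 'b::ab_group_add \<Rightarrow> 'b" +
  fixes \<phi> :: "'b \<Rightarrow> 'b"
  assumes linear: "Vector_Spaces.linear scale scale \<phi>"
begin

sublocale phi: module_hom scale scale \<phi>
  using linear by (rule module_hom_linearI)

lemma funpow_zero [simp]: "(\<phi> ^^ k) 0 = 0"
  by (induction k) auto

lemma funpow_diff: "(\<phi> ^^ k) (x - y) = (\<phi> ^^ k) x - (\<phi> ^^ k) y"
  by (induction k) (auto simp: phi.diff)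

abbreviation U where "U \<equiv> U_part \<phi>"
abbreviation W where "W \<equiv> W_part scale \<phi>"
abbreviation D where "D \<equiv> drazin_inv scale \<phi>"

lemma poly_endo_eq_sum_upto:
  assumes "degree p \<le> N"
  shows "poly_endo scale p \<phi> v = (\<Sum>i\<le>N. scale (coeff p i) ((\<phi> ^^ i) v))"
  unfolding poly_endo_def
  by (rule sum.mono_neutral_left) (use assms in \<open>auto intro!: coeff_eq_0 simp: not_le\<close>)

lemma poly_endo_pCons: "poly_endo scale (pCons a p) \<phi> v = scale a v + \<phi> (poly_endo scale p \<phi> v)"
proof -
  have "poly_endo scale (pCons a p) \<phi> v
      = (\<Sum>i\<le>Suc (degree p). scale (coeff (pCons a p) i) ((\<phi> ^^ i) v))"
    by (rule poly_endo_eq_sum_upto) (simp add: degree_pCons_le)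
  also have "\<dots> = scale a v + (\<Sum>i\<le>degree p. scale (coeff p i) ((\<phi> ^^ Suc i) v))"
    by (subst sum.atMost_Suc_shift) simp
  also have "\<dots> = scale a v + \<phi> (poly_endo scale p \<phi> v)"
    by (simp add: poly_endo_def phi.sum phi.scale)
  finally show ?thesis .
qed

lemma poly_endo_0 [simp]: "poly_endo scale 0 \<phi> v = 0"
  by (simp add: poly_endo_def)

lemma poly_endo_zero [simp]: "poly_endo scale p \<phi> 0 = 0"
  by (induction p) (simp_all add: poly_endo_pCons)

lemma poly_endo_diff:
  "poly_endo scale p \<phi> (x - y) = poly_endo scale p \<phi> x - poly_endo scale p \<phi> y"
  by (induction p) (simp_all add: poly_endo_pCons phi.diff scale_right_diff_distrib)

lemma poly_endo_phi: "poly_endo scale p \<phi> (\<phi> v) = \<phi> (poly_endo scale p \<phi> v)"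
  by (induction p) (simp_all add: poly_endo_pCons phi.add phi.scale)

lemma poly_endo_smult: "poly_endo scale (smult c p) \<phi> v = scale c (poly_endo scale p \<phi> v)"
  by (induction p) (simp_all add: poly_endo_pCons phi.scale scale_right_distrib)

lemma poly_endo_add:
  "poly_endo scale (p + q) \<phi> v = poly_endo scale p \<phi> v + poly_endo scale q \<phi> v"
proof -
  have "degree (p + q) \<le> max (degree p) (degree q)" by (rule degree_add_le) auto
  then show ?thesis
    by (simp add: poly_endo_eq_sum_upto[of _ "max (degree p) (degree q)"] scale_left_distrib
        sum.distrib)
qed

lemma poly_endo_mult:
  "poly_endo scale (p * q) \<phi> v = poly_endo scale p \<phi> (poly_endo scale q \<phi> v)"
  by (induction p) (simp_all add: poly_endo_pCons poly_endo_add poly_endo_smult)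

lemma poly_endo_commute:
  "poly_endo scale p \<phi> (poly_endo scale q \<phi> v) = poly_endo scale q \<phi> (poly_endo scale p \<phi> v)"
  by (metis poly_endo_mult mult.commute)

lemma poly_endo_1 [simp]: "poly_endo scale 1 \<phi> v = v"
  by (simp add: one_pCons poly_endo_pCons)

lemma poly_endo_X_power: "poly_endo scale ([:0, 1:] ^ k) \<phi> v = (\<phi> ^^ k) v"
  by (induction k) (simp_all add: poly_endo_mult poly_endo_pCons)

lemma mem_W_part_iff: "v \<in> W \<longleftrightarrow> (\<exists>p. poly p 0 \<noteq> 0 \<and> poly_endo scale p \<phi> v = 0)"
  by (simp add: W_part_def coprime_X_iff_poly_0)

lemma zero_in_U_part [simp]: "0 \<in> U"
  unfolding U_part_def by (auto intro: exI[of _ 0])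

lemma zero_in_W_part [simp]: "0 \<in> W"
  unfolding mem_W_part_iff by (auto intro: exI[of _ 1])

lemma U_part_Int_W_part: "U \<inter> W = {0}"
proof -
  have "v = 0" if "v \<in> U" "v \<in> W" for v
  proof -
    from that obtain m p where m: "(\<phi> ^^ m) v = 0"
      and p: "poly p 0 \<noteq> 0" "poly_endo scale p \<phi> v = 0"
      unfolding U_part_def mem_W_part_iff by auto
    from bezout_X_power[OF p(1)] obtain s t where st: "s * p + t * [:0, 1:] ^ m = 1" by blast
    have "v = poly_endo scale (s * p + t * [:0, 1:] ^ m) \<phi> v" using st by simp
    also have "\<dots> = 0" by (simp add: poly_endo_add poly_endo_mult poly_endo_X_power p m)
    finally show ?thesis .
  qed
  then show ?thesis by auto
qed

lemma U_part_phi: "v \<in> U \<Longrightarrow> \<phi> v \<in> U"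
proof -
  assume "v \<in> U"
  then obtain m where "(\<phi> ^^ m) v = 0" unfolding U_part_def by blast
  then have "(\<phi> ^^ m) (\<phi> v) = 0" by (simp flip: funpow_swap1)
  then show ?thesis unfolding U_part_def by blast
qed

lemma U_part_funpow: "v \<in> U \<Longrightarrow> (\<phi> ^^ k) v \<in> U"
  by (induction k) (auto simp: U_part_phi)

lemma W_part_phi: "v \<in> W \<Longrightarrow> \<phi> v \<in> W"
  unfolding mem_W_part_iff by (auto simp: poly_endo_phi)

lemma W_part_funpow: "v \<in> W \<Longrightarrow> (\<phi> ^^ k) v \<in> W"
  by (induction k) (auto simp: W_part_phi)

lemma U_part_diff: "u \<in> U \<Longrightarrow> u' \<in> U \<Longrightarrow> u - u' \<in> U"
proof -
  assume "u \<in> U" "u' \<in> U"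
  then obtain m m' where "(\<phi> ^^ m) u = 0" "(\<phi> ^^ m') u' = 0" unfolding U_part_def by auto
  then have "(\<phi> ^^ (m' + m)) u = 0" "(\<phi> ^^ (m + m')) u' = 0" by (simp_all add: funpow_add)
  then have "(\<phi> ^^ (m + m')) (u - u') = 0" by (simp add: funpow_diff add.commute)
  then show ?thesis unfolding U_part_def by blast
qed

lemma W_part_diff: "w \<in> W \<Longrightarrow> w' \<in> W \<Longrightarrow> w - w' \<in> W"
proof -
  assume "w \<in> W" "w' \<in> W"
  then obtain p p' where p: "poly p 0 \<noteq> 0" "poly_endo scale p \<phi> w = 0"
    and p': "poly p' 0 \<noteq> 0" "poly_endo scale p' \<phi> w' = 0"
    unfolding mem_W_part_iff by auto
  have "poly_endo scale (p * p') \<phi> (w - w') = 0"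
    by (simp add: poly_endo_diff poly_endo_mult p' poly_endo_commute[of p p'] p)
  moreover have "poly (p * p') 0 \<noteq> 0" using p p' by simp
  ultimately show ?thesis unfolding mem_W_part_iff by blast
qed

lemma W_part_phi_surj: "w \<in> W \<Longrightarrow> \<exists>y\<in>W. \<phi> y = w"
proof -
  assume "w \<in> W"
  then obtain p where p: "poly p 0 \<noteq> 0" "poly_endo scale p \<phi> w = 0"
    unfolding mem_W_part_iff by auto
  from bezout_X_power[OF p(1)] obtain s t where "s * p + t * [:0, 1:] ^ 1 = 1" by blast
  then have "w = poly_endo scale (s * p + t * [:0, 1:]) \<phi> w" by simp
  also have "\<dots> = \<phi> (poly_endo scale t \<phi> w)"
    by (simp add: poly_endo_add poly_endo_mult p poly_endo_pCons poly_endo_phi)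
  finally have "w = \<phi> (poly_endo scale t \<phi> w)" .
  moreover have "poly_endo scale p \<phi> (poly_endo scale t \<phi> w) = 0"
    by (simp add: poly_endo_commute[of p t] p)
  then have "poly_endo scale t \<phi> w \<in> W" using p unfolding mem_W_part_iff by blast
  ultimately show ?thesis by metis
qed

lemma W_part_funpow_surj: "w \<in> W \<Longrightarrow> \<exists>y\<in>W. (\<phi> ^^ k) y = w"
proof (induction k arbitrary: w)
  case (Suc k)
  then obtain y where "y \<in> W" "\<phi> y = w" using W_part_phi_surj by blast
  with Suc.IH obtain y' where "y' \<in> W" "(\<phi> ^^ k) y' = y" by blast
  with \<open>\<phi> y = w\<close> show ?case by auto
qed auto

lemma drazin_inv_eq:
  assumes "u \<in> U" "w \<in> W" "y \<in> W" "\<phi> y = w"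
  shows "D (u + w) = y"
  unfolding drazin_inv_def
proof (rule the_equality)
  show "y \<in> W \<and> (\<exists>u'\<in>U. \<exists>w'\<in>W. u + w = u' + w' \<and> \<phi> y = w')"
    using assms by blast
next
  fix y' assume "y' \<in> W \<and> (\<exists>u'\<in>U. \<exists>w'\<in>W. u + w = u' + w' \<and> \<phi> y' = w')"
  then obtain u' w' where y': "y' \<in> W" "\<phi> y' = w'"
    and u'w': "u' \<in> U" "w' \<in> W" "u + w = u' + w'"
    by blast
  have "u - u' = w' - w" using u'w'(3) by (simp add: algebra_simps)
  moreover have "u - u' \<in> U" "w' - w \<in> W" using assms u'w' by (simp_all add: U_part_diff W_part_diff)
  ultimately have "w' - w = 0" using U_part_Int_W_part by (metis IntI singletonD)
  then have "\<phi> (y' - y) = 0" using y'(2) assms(4) by (simp add: phi.diff)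
  then have "y' - y \<in> U" unfolding U_part_def by (auto intro: exI[of _ 1])
  moreover have "y' - y \<in> W" using y'(1) assms(3) by (rule W_part_diff)
  ultimately have "y' - y = 0" using U_part_Int_W_part by (metis IntI singletonD)
  then show "y' = y" by simp
qed

lemma drazin_inv_phi:
  assumes "u \<in> U" "w \<in> W"
  shows "D (\<phi> (u + w)) = w"
  using drazin_inv_eq[OF U_part_phi[OF assms(1)] W_part_phi[OF assms(2)] assms(2) refl]
  by (simp add: phi.add)

lemma annihilating_poly_exists:
  assumes "finite B" and "\<And>i. (\<phi> ^^ i) z \<in> span B"
  shows "\<exists>q. q \<noteq> 0 \<and> degree q \<le> card B \<and> poly_endo scale q \<phi> z = 0"
proof -
  obtain c where c: "\<exists>i\<le>card B. c i \<noteq> 0" "(\<Sum>i\<le>card B. scale (c i) ((\<phi> ^^ i) z)) = 0"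
    using family_in_span_dependent[OF assms(1), of "\<lambda>i. (\<phi> ^^ i) z"] assms(2) by blast
  define q where "q = (\<Sum>i\<le>card B. monom (c i) i)"
  have coeff_q: "coeff q i = (if i \<le> card B then c i else 0)" for i
    unfolding q_def coeff_sum by simp
  have degree_q: "degree q \<le> card B" by (rule degree_le) (simp add: coeff_q)
  have "q \<noteq> 0" using c(1) coeff_q by (metis coeff_0)
  have "poly_endo scale q \<phi> z = (\<Sum>i\<le>card B. scale (coeff q i) ((\<phi> ^^ i) z))"
    by (rule poly_endo_eq_sum_upto[OF degree_q])
  also have "\<dots> = (\<Sum>i\<le>card B. scale (c i) ((\<phi> ^^ i) z))"
    by (rule sum.cong) (simp_all add: coeff_q)
  finally have "poly_endo scale q \<phi> z = 0" using c(2) by simp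
  with \<open>q \<noteq> 0\<close> degree_q show ?thesis by blast
qed

lemma range_funpow_subset_W_part:
  assumes "finite B" and "range (\<phi> ^^ n) \<subseteq> span B"
  shows "range (\<phi> ^^ (card B + n)) \<subseteq> W"
proof
  fix v' assume "v' \<in> range (\<phi> ^^ (card B + n))"
  then obtain v where v': "v' = (\<phi> ^^ (card B + n)) v" by blast
  define z where "z = (\<phi> ^^ n) v"
  have "(\<phi> ^^ i) z = (\<phi> ^^ n) ((\<phi> ^^ i) v)" for i
    unfolding z_def by (metis comp_apply funpow_add add.commute)
  then have "(\<phi> ^^ i) z \<in> span B" for i using assms(2) by auto
  then obtain q where q: "q \<noteq> 0" "degree q \<le> card B" "poly_endo scale q \<phi> z = 0"
    using annihilating_poly_exists[OF assms(1)] by blast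
  define k where "k = order 0 q"
  obtain p where p: "q = [:0, 1:] ^ k * p" "\<not> [:0, 1:] dvd p"
    using order_decomp[OF q(1), of 0] unfolding k_def by auto
  have "k \<le> card B" using order_degree[OF q(1), of 0] q(2) unfolding k_def by simp
  have "poly p 0 \<noteq> 0" using p(2) poly_eq_0_iff_dvd[of p 0] by simp
  moreover have "poly_endo scale p \<phi> ((\<phi> ^^ k) z) = 0"
    using q(3) p(1) by (metis poly_endo_mult poly_endo_X_power mult.commute)
  ultimately have "(\<phi> ^^ k) z \<in> W" unfolding mem_W_part_iff by blast
  then have "(\<phi> ^^ (card B - k)) ((\<phi> ^^ k) z) \<in> W" by (rule W_part_funpow)
  moreover have "card B + n = (card B - k) + k + n" using \<open>k \<le> card B\<close> by simp
  then have "(\<phi> ^^ (card B - k)) ((\<phi> ^^ k) z) = v'"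
    unfolding v' z_def by (simp only: funpow_add comp_apply)
  ultimately show "v' \<in> W" by simp
qed

end

locale finite_potent_endo = linear_endo +
  assumes finite_potent: "finite_potent scale \<phi>"
begin

lemma ex_range_funpow_subset_W_part: "\<exists>N. range (\<phi> ^^ N) \<subseteq> W"
  using finite_potent range_funpow_subset_W_part
  unfolding finite_potent_def fin_dim_subset_def by blast

lemma U_part_W_part_decomp: "\<exists>u\<in>U. \<exists>w\<in>W. v = u + w"
proof -
  obtain N where "range (\<phi> ^^ N) \<subseteq> W" using ex_range_funpow_subset_W_part by blast
  then have "(\<phi> ^^ N) v \<in> W" by auto
  then obtain y where y: "y \<in> W" "(\<phi> ^^ N) y = (\<phi> ^^ N) v" using W_part_funpow_surj by metis
  then have "(\<phi> ^^ N) (v - y) = 0" by (simp add: funpow_diff)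
  then have "v - y \<in> U" unfolding U_part_def by blast
  with y(1) show ?thesis by (metis diff_add_cancel)
qed

lemma U_part_nilpotent: "\<exists>N. \<forall>u\<in>U. (\<phi> ^^ N) u = 0"
proof -
  obtain N where N: "range (\<phi> ^^ N) \<subseteq> W" using ex_range_funpow_subset_W_part by blast
  have "(\<phi> ^^ N) u = 0" if "u \<in> U" for u
    using U_part_funpow[OF that, of N] N U_part_Int_W_part by blast
  then show ?thesis by blast
qed

lemma funpow_fp_index_U_part: "u \<in> U \<Longrightarrow> (\<phi> ^^ fp_index \<phi>) u = 0"
  using LeastI_ex[OF U_part_nilpotent] unfolding fp_index_def by blast

lemma fp_index_le_1_iff: "fp_index \<phi> \<le> 1 \<longleftrightarrow> (\<forall>u\<in>U. \<phi> u = 0)"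
proof
  assume "fp_index \<phi> \<le> 1"
  show "\<forall>u\<in>U. \<phi> u = 0"
  proof
    fix u assume "u \<in> U"
    then have "(\<phi> ^^ fp_index \<phi>) u = 0" by (rule funpow_fp_index_U_part)
    with \<open>fp_index \<phi> \<le> 1\<close> show "\<phi> u = 0" by (cases "fp_index \<phi>") auto
  qed
next
  assume "\<forall>u\<in>U. \<phi> u = 0"
  then show "fp_index \<phi> \<le> 1" unfolding fp_index_def by (intro Least_le) simp
qed

lemma drazin_inv_comp_commute: "D \<circ> \<phi> = \<phi> \<circ> D"
proof
  fix v
  obtain u w where uw: "u \<in> U" "w \<in> W" "v = u + w" using U_part_W_part_decomp by blast
  obtain y where y: "y \<in> W" "\<phi> y = w" using W_part_phi_surj[OF uw(2)] by blast
  have "D v = y" using drazin_inv_eq[OF uw(1,2) y] uw(3) by simp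
  then show "(D \<circ> \<phi>) v = (\<phi> \<circ> D) v" using drazin_inv_phi[OF uw(1,2)] uw(3) y(2) by simp
qed

lemma phi_drazin_inv_phi_iff: "\<phi> \<circ> D \<circ> \<phi> = \<phi> \<longleftrightarrow> (\<forall>u\<in>U. \<phi> u = 0)"
proof
  assume inner: "\<phi> \<circ> D \<circ> \<phi> = \<phi>"
  show "\<forall>u\<in>U. \<phi> u = 0"
  proof
    fix u assume "u \<in> U"
    have "\<phi> u = \<phi> (D (\<phi> (u + 0)))" using inner by (metis comp_apply add_0_right)
    then show "\<phi> u = 0" using drazin_inv_phi[OF \<open>u \<in> U\<close> zero_in_W_part] by simp
  qed
next
  assume kill: "\<forall>u\<in>U. \<phi> u = 0"
  show "\<phi> \<circ> D \<circ> \<phi> = \<phi>"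
  proof
    fix v
    obtain u w where uw: "u \<in> U" "w \<in> W" "v = u + w" using U_part_W_part_decomp by blast
    then show "(\<phi> \<circ> D \<circ> \<phi>) v = \<phi> v"
      using drazin_inv_phi[OF uw(1,2)] kill by (simp add: phi.add)
  qed
qed

end

theorem corollary3p13:
  fixes scale :: "'a::field \<Rightarrow> 'b::ab_group_add \<Rightarrow> 'b" and \<phi> :: "'b \<Rightarrow> 'b"
  assumes "vector_space scale"
    and "Vector_Spaces.linear scale scale \<phi>"
    and "finite_potent scale \<phi>"
  shows "G_drazin_inverse \<phi> (drazin_inv scale \<phi>) (fp_index \<phi>) \<longleftrightarrow> fp_index \<phi> \<le> 1"
proof -
  interpret finite_potent_endo scale \<phi>
    using assms by (simp add: finite_potent_endo_def finite_potent_endo_axioms_def linear_endo_def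
        linear_endo_axioms_def)
  have "D \<circ> \<phi> ^^ fp_index \<phi> = \<phi> ^^ fp_index \<phi> \<circ> D"
    using drazin_inv_comp_commute by (rule funpow_comp_commute)
  then show ?thesis
    unfolding G_drazin_inverse_def phi_drazin_inv_phi_iff fp_index_le_1_iff by simp
qed

end
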